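(* Any streaming algorithm (possibly randomized, succeeding with constant probability) for the $k$-connectivity augmentation problem with unweighted links in the fully streaming model, even when $k$ is known, that approximates the optimal solution to any finite factor requires $\Omega(nk)$ bits of space.
   Context: $k$-connectivity augmentation problem: given a $(k-1)$-edge-connected $n$-vertex graph $G=(V,E)$ (possibly with parallel edges) and a set of links $L\subseteq\binom{V}{2}$, find a minimum-cardinality $S\subseteq L$ such that $(V,E\cup S)$ is $k$-edge-connected. Fully streaming model: the edges of $E$ and the links of $L$ arrive in a single stream in an arbitrary interleaved order, and all storage counts toward space. *)

theory Defs
  imports "HOL-Probability.Probability"
begin

text \<open>Vertices are 0..<n. An edge or link is an unordered pair, a 2-element nat set.
  The graph G is a multiset of edges (parallel edges allowed).\<close>

definition verts :: "nat \<Rightarrow> nat set" where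
  "verts n = {0..<n}"

definition is_pair :: "nat \<Rightarrow> nat set \<Rightarrow> bool" where
  "is_pair n e \<longleftrightarrow> e \<subseteq> verts n \<and> card e = 2"

definition cut_size :: "nat set multiset \<Rightarrow> nat set \<Rightarrow> nat" where
  "cut_size E X = size (filter_mset (\<lambda>e. e \<inter> X \<noteq> {} \<and> e - X \<noteq> {}) E)"

definition k_edge_connected :: "nat \<Rightarrow> nat \<Rightarrow> nat set multiset \<Rightarrow> bool" where
  "k_edge_connected n k E \<longleftrightarrow>
     (\<forall>X. X \<noteq> {} \<and> X \<subset> verts n \<longrightarrow> k \<le> cut_size E X)"

text \<open>Stream items: Inl e is a graph edge, Inr l is a link.\<close>
type_synonym item = "nat set + nat set"

definition stream_edges :: "item list \<Rightarrow> nat set multiset" where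
  "stream_edges xs = mset [e. Inl e \<leftarrow> xs]"

definition stream_links :: "item list \<Rightarrow> nat set set" where
  "stream_links xs = set [l. Inr l \<leftarrow> xs]"

definition valid_stream :: "nat \<Rightarrow> nat \<Rightarrow> item list \<Rightarrow> bool" where
  "valid_stream n k xs \<longleftrightarrow>
     (\<forall>x\<in>set xs. is_pair n (case x of Inl e \<Rightarrow> e | Inr l \<Rightarrow> l)) \<and>
     k_edge_connected n (k - 1) (stream_edges xs) \<and>
     k_edge_connected n k (stream_edges xs + mset_set (stream_links xs))"

definition augments :: "nat \<Rightarrow> nat \<Rightarrow> item list \<Rightarrow> nat set set \<Rightarrow> bool" where
  "augments n k xs S \<longleftrightarrow> S \<subseteq> stream_links xs \<and>
     k_edge_connected n k (stream_edges xs + mset_set S)"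

definition approx_solution :: "real \<Rightarrow> nat \<Rightarrow> nat \<Rightarrow> item list \<Rightarrow> nat set set \<Rightarrow> bool" where
  "approx_solution \<alpha> n k xs S \<longleftrightarrow> augments n k xs S \<and>
     (\<forall>S'. augments n k xs S' \<longrightarrow> real (card S) \<le> \<alpha> * real (card S'))"

text \<open>A randomized streaming algorithm: a random seed r drawn from a distribution
  (public randomness, not charged to space), an initial memory state, an update rule
  applied to each arriving item, and an output rule.\<close>
record stream_alg =
  init :: "nat \<Rightarrow> bool list"
  step :: "nat \<Rightarrow> bool list \<Rightarrow> item \<Rightarrow> bool list"
  out :: "nat \<Rightarrow> bool list \<Rightarrow> nat set set"

definition run :: "stream_alg \<Rightarrow> nat \<Rightarrow> item list \<Rightarrow> bool list" where
  "run A r xs = fold (\<lambda>x st. step A r st x) xs (init A r)"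

definition uses_space :: "stream_alg \<Rightarrow> nat \<Rightarrow> nat \<Rightarrow> nat \<Rightarrow> bool" where
  "uses_space A n k s \<longleftrightarrow>
     (\<forall>r xs i. valid_stream n k xs \<longrightarrow> length (run A r (take i xs)) \<le> s)"

definition solves :: "stream_alg \<Rightarrow> nat pmf \<Rightarrow> real \<Rightarrow> nat \<Rightarrow> nat \<Rightarrow> bool" where
  "solves A P \<alpha> n k \<longleftrightarrow>
     (\<forall>xs. valid_stream n k xs \<longrightarrow>
        measure_pmf.prob P {r. approx_solution \<alpha> n k xs (out A r (run A r xs))} \<ge> 2/3)"

end

theory Submission
  imports Defs
begin

text \<open>Reduction from the one-way communication problem INDEX. Alice holds bits \<open>x (j, t)\<close> for
  \<open>j < M \<approx> n/8\<close> and \<open>t < D \<approx> k/2\<close> and streams, for every index, a two-edge gadget between the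
  left vertex pair \<open>j\<close> and the right vertex pair \<open>j + t\<close>: parallel edges for \<open>True\<close>, crossed
  edges for \<open>False\<close>. Bob, who wants \<open>x (j, t)\<close>, streams \<open>k\<close> copies of the pair \<open>{a, b}\<close> of
  first vertices of these two pairs, \<open>k\<close> copies of a star from a hub \<open>0\<close> to all other
  vertices, padding edges \<open>{a, 0}\<close>, and the single link \<open>{a, 0}\<close>. Then every cut other than
  \<open>{a, b}\<close> and its complement has at least \<open>k\<close> edges, while \<open>{a, b}\<close> has \<open>k - 1\<close> edges if the
  bit is \<open>True\<close> and \<open>k + 1\<close> otherwise. So the optimum is \<open>1\<close> or \<open>0\<close> according to the bit, and
  any approximate solution reveals it. The memory state after Alice's part is therefore a
  one-way message from which each of \<open>M D \<ge> n k / 256\<close> bits can be recovered with probability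
  \<open>2/3\<close>. Fixing a good seed by averaging, and bounding the number of strings within Hamming
  distance \<open>5m/12\<close> of any decoded word by a Chernoff-type weight argument, shows that such a
  message needs \<open>\<Omega>(M D)\<close> bits.\<close>

definition hamming_dist :: "'i set \<Rightarrow> ('i \<Rightarrow> bool) \<Rightarrow> ('i \<Rightarrow> bool) \<Rightarrow> nat" where
  "hamming_dist I x y = card {i\<in>I. x i \<noteq> y i}"

lemma card_agreements_eq:
  "finite I \<Longrightarrow> card {i\<in>I. x i = y i} = card I - hamming_dist I x y"
proof -
  assume "finite I"
  then have "card {i\<in>I. x i = y i} + hamming_dist I x y = card I"
    unfolding hamming_dist_def by (subst card_Un_disjoint[symmetric]) (auto intro: arg_cong[where f=card])
  then show ?thesis by linarith
qed

lemma sum_power_hamming_dist: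
  fixes t :: "'a :: comm_semiring_1"
  assumes "finite I"
  shows "(\<Sum>x\<in>PiE I (\<lambda>_. UNIV). t ^ hamming_dist I y x) = (1 + t) ^ card I"
proof -
  have "t ^ hamming_dist I y x = (\<Prod>i\<in>I. if y i \<noteq> x i then t else 1)" for x
    using assms by (simp add: hamming_dist_def prod.If_cases Int_def)
  then have "(\<Sum>x\<in>PiE I (\<lambda>_. UNIV). t ^ hamming_dist I y x)
      = (\<Prod>i\<in>I. \<Sum>b\<in>UNIV. if y i \<noteq> b then t else 1)"
    using assms by (simp add: prod_sum_PiE)
  also have "\<dots> = (\<Prod>i\<in>I. 1 + t)"
    by (intro prod.cong refl) (simp add: UNIV_bool add.commute)
  finally show ?thesis by simp
qed

lemma card_agreements_le:
  fixes t :: real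
  assumes "finite I" "0 < t" "t \<le> 1"
  shows "real (card {i\<in>I. y i = x i})
    \<le> real (card I - Suc d) + real (card I) * t ^ hamming_dist I y x / t ^ d"
proof (cases "hamming_dist I y x \<le> d")
  case True
  then have "t ^ d \<le> t ^ hamming_dist I y x"
    using assms by (intro power_decreasing) auto
  then have "real (card I) \<le> real (card I) * t ^ hamming_dist I y x / t ^ d"
    using assms by (simp add: le_divide_eq mult_left_mono)
  moreover have "card {i\<in>I. y i = x i} \<le> card I"
    using assms by (intro card_mono) auto
  ultimately show ?thesis by linarith
next
  case False
  then have "card {i\<in>I. y i = x i} \<le> card I - Suc d"
    using card_agreements_eq[OF assms(1)] by simp
  moreover have "0 \<le> real (card I) * t ^ hamming_dist I y x / t ^ d"
    using assms by simp
  ultimately show ?thesis by linarith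
qed

lemma exists_seed_good_on_average:
  fixes P :: "'r pmf" and ok :: "'r \<Rightarrow> 'x \<Rightarrow> 'i \<Rightarrow> bool"
  assumes "finite X" "finite I"
    and success: "\<And>x i. x \<in> X \<Longrightarrow> i \<in> I \<Longrightarrow> p \<le> measure_pmf.prob P {r. ok r x i}"
  shows "\<exists>r. p * card X * card I \<le> (\<Sum>x\<in>X. card {i\<in>I. ok r x i})"
proof (rule ccontr)
  define f where "f r = (\<Sum>x\<in>X. \<Sum>i\<in>I. indicator {r. ok r x i} r :: real)" for r
  have f_eq: "f r = real (\<Sum>x\<in>X. card {i\<in>I. ok r x i})" for r
    using assms(2) by (simp add: f_def indicator_def Int_def)
  have indicator_integrable: "integrable (measure_pmf P) (indicator A :: 'r \<Rightarrow> real)" for A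
    by (rule measure_pmf.integrable_const_bound[where B=1]) auto
  then have integrable: "integrable (measure_pmf P) f"
    unfolding f_def by (intro Bochner_Integration.integrable_sum)
  assume "\<not> ?thesis"
  then have "AE r in measure_pmf P. f r < p * card X * card I"
    by (simp add: f_eq not_le)
  then have "measure_pmf.expectation P f < p * card X * card I"
    using integrable by (intro measure_pmf.expectation_less)
  moreover have "measure_pmf.expectation P f = (\<Sum>x\<in>X. \<Sum>i\<in>I. measure_pmf.prob P {r. ok r x i})"
    unfolding f_def
    by (simp add: indicator_integrable Bochner_Integration.integrable_sum)
  moreover have "p * card X * card I \<le> (\<Sum>x\<in>X. \<Sum>i\<in>I. measure_pmf.prob P {r. ok r x i})"
  proof -
    have "(\<Sum>x\<in>X. \<Sum>i\<in>I. p) \<le> (\<Sum>x\<in>X. \<Sum>i\<in>I. measure_pmf.prob P {r. ok r x i})"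
      by (intro sum_mono success)
    then show ?thesis by (simp add: mult.commute mult.left_commute)
  qed
  ultimately show False by linarith
qed

lemma two_power_div5_le:
  fixes c :: real
  assumes bound: "2 ^ m * (5/7) ^ d \<le> 12 * c * (12/7) ^ m" and "12 * d \<le> 5 * m" and "0 \<le> c"
  shows "2 ^ (m div 5) \<le> 2 ^ 48 * c ^ 12"
proof -
  \<comment> \<open>\<open>\<rho> \<approx> 1.18\<close> and \<open>\<rho> ^ 5 \<ge> 2\<close>\<close>
  define \<rho> :: real where "\<rho> = 2 ^ 12 * (5/7) ^ 5 / (12/7) ^ 12"
  have "\<rho> * (12/7) ^ 12 = 2 ^ 12 * (5/7) ^ 5"
    by (simp add: \<rho>_def)
  then have "\<rho> ^ m * ((12/7) ^ 12) ^ m = (2 ^ 12 * (5/7) ^ 5) ^ m"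
    by (metis power_mult_distrib)
  also have "\<dots> = (2 ^ m) ^ 12 * (5/7) ^ (5 * m)"
    by (metis power_mult power_mult_distrib mult.commute)
  also have "\<dots> \<le> (2 ^ m) ^ 12 * (5/7) ^ (12 * d)"
    using assms(2) by (intro mult_left_mono power_decreasing) auto
  also have "\<dots> = (2 ^ m * (5/7) ^ d) ^ 12"
    by (metis power_mult power_mult_distrib mult.commute)
  also have "\<dots> \<le> (12 * c * (12/7) ^ m) ^ 12"
    using bound by (intro power_mono) auto
  also have "\<dots> = 12 ^ 12 * c ^ 12 * ((12/7) ^ 12) ^ m"
    by (simp add: power_mult_distrib power_mult[symmetric] mult.commute)
  finally have "\<rho> ^ m \<le> 12 ^ 12 * c ^ 12"
    by simp
  have "(2::real) ^ (m div 5) \<le> (\<rho> ^ 5) ^ (m div 5)"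
    by (intro power_mono) (auto simp: \<rho>_def power_divide)
  also have "\<dots> \<le> \<rho> ^ m"
    unfolding power_mult[symmetric] by (intro power_increasing) (auto simp: \<rho>_def power_divide)
  also have "\<dots> \<le> 12 ^ 12 * c ^ 12"
    by fact
  also have "\<dots> \<le> 2 ^ 48 * c ^ 12"
    using assms(3) by (intro mult_right_mono) auto
  finally show ?thesis .
qed

text \<open>Every \<open>x\<close> within distance \<open>d\<close> of its decoding receives weight at least \<open>t ^ d\<close> from
  that decoded word, while each decoded word spreads total weight \<open>(1 + t) ^ card I\<close>.\<close>

lemma sum_agreements_le:
  fixes I :: "'i set" and enc :: "('i \<Rightarrow> bool) \<Rightarrow> 'm" and dec :: "'m \<Rightarrow> 'i \<Rightarrow> bool" and t :: real
  defines "X \<equiv> PiE I (\<lambda>_. UNIV :: bool set)"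
  assumes "finite I" "0 < t" "t \<le> 1"
  shows "(\<Sum>x\<in>X. real (card {i\<in>I. dec (enc x) i = x i}))
    \<le> 2 ^ card I * real (card I - Suc d) + real (card I) * real (card (enc ` X)) * (1 + t) ^ card I / t ^ d"
proof -
  let ?m = "card I"
  let ?w = "\<lambda>x. \<Sum>c\<in>enc ` X. t ^ hamming_dist I (dec c) x"
  have "finite X" and card_X: "card X = 2 ^ ?m"
    using \<open>finite I\<close> by (simp_all add: X_def finite_PiE card_PiE)
  have agree: "real (card {i\<in>I. dec (enc x) i = x i}) \<le> real (?m - Suc d) + ?m * ?w x / t ^ d"
    if "x \<in> X" for x
  proof -
    have "t ^ hamming_dist I (dec (enc x)) x \<le> ?w x"
      using that \<open>finite X\<close> \<open>0 < t\<close> by (intro member_le_sum) auto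
    then have "?m * t ^ hamming_dist I (dec (enc x)) x / t ^ d \<le> ?m * ?w x / t ^ d"
      using \<open>0 < t\<close> by (intro divide_right_mono mult_left_mono) auto
    then show ?thesis
      using card_agreements_le[OF assms(2-4), of "dec (enc x)" x d] by linarith
  qed
  have "(\<Sum>x\<in>X. ?w x) = (\<Sum>c\<in>enc ` X. \<Sum>x\<in>X. t ^ hamming_dist I (dec c) x)"
    by (rule sum.swap)
  also have "\<dots> = card (enc ` X) * (1 + t) ^ ?m"
    using sum_power_hamming_dist[OF \<open>finite I\<close>, of t] by (simp add: X_def)
  finally have weights: "(\<Sum>x\<in>X. ?w x) = card (enc ` X) * (1 + t) ^ ?m" .
  have "(\<Sum>x\<in>X. real (card {i\<in>I. dec (enc x) i = x i})) \<le> (\<Sum>x\<in>X. real (?m - Suc d) + ?m * ?w x / t ^ d)"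
    by (rule sum_mono) (rule agree)
  also have "\<dots> = 2 ^ ?m * real (?m - Suc d) + real ?m * real (card (enc ` X)) * (1 + t) ^ ?m / t ^ d"
    by (simp add: sum.distrib card_X weights sum_divide_distrib[symmetric] sum_distrib_left[symmetric])
  finally show ?thesis .
qed

lemma index_messages_lower_bound:
  fixes I :: "'i set" and enc :: "('i \<Rightarrow> bool) \<Rightarrow> 'm" and dec :: "'m \<Rightarrow> 'i \<Rightarrow> bool"
  defines "X \<equiv> PiE I (\<lambda>_. UNIV :: bool set)"
  assumes "finite I" and messages: "card (enc ` X) \<le> K"
    and decodes: "2/3 * card X * card I \<le> (\<Sum>x\<in>X. card {i\<in>I. dec (enc x) i = x i})"
  shows "2 ^ (card I div 5) \<le> 2 ^ 48 * K ^ 12"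
proof (cases "card I = 0")
  case True
  have "X \<noteq> {}" "finite X"
    using \<open>finite I\<close> by (simp_all add: X_def PiE_eq_empty_iff finite_PiE)
  then have "1 \<le> K"
    using messages by (metis One_nat_def Suc_leI card_gt_0_iff finite_imageI image_is_empty le_trans)
  then show ?thesis
    using True by simp
next
  case False
  define m where "m = card I"
  \<comment> \<open>radius \<open>d \<approx> 5m/12\<close> with the weight \<open>5/7 = d/(m - d)\<close> that optimises the Chernoff bound\<close>
  define d where "d = 5 * m div 12"
  define B where "B = real K * (12/7) ^ m / (5/7) ^ d"
  have "card X = 2 ^ m"
    using \<open>finite I\<close> by (simp add: X_def m_def card_PiE)
  then have "2/3 * 2 ^ m * m \<le> (\<Sum>x\<in>X. real (card {i\<in>I. dec (enc x) i = x i}))"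
    using decodes by (simp add: m_def)
  also have "\<dots> \<le> 2 ^ m * real (m - Suc d) + real m * real (card (enc ` X)) * (12/7) ^ m / (5/7) ^ d"
    using sum_agreements_le[OF \<open>finite I\<close>, of "5/7" dec enc d] by (simp add: X_def m_def)
  also have "real m * real (card (enc ` X)) * (12/7) ^ m / (5/7) ^ d \<le> m * B"
    using messages unfolding B_def times_divide_eq_right[symmetric] mult.assoc
    by (intro mult_left_mono divide_right_mono mult_right_mono) auto
  finally have decoded: "2/3 * 2 ^ m * m \<le> 2 ^ m * real (m - Suc d) + m * B"
    by simp
  have d_bounds: "12 * d \<le> 5 * m" "5 * m < 12 * d + 12"
    unfolding d_def by linarith+
  then have "real (m - Suc d) = real m - real d - 1" and d_large: "real m / 12 \<le> real d + 1 - real m / 3"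
    using False unfolding m_def by (simp_all add: of_nat_diff)
  with decoded have "2/3 * 2 ^ m * m \<le> 2 ^ m * (real m - real d - 1) + m * B"
    by simp
  moreover have "(real d + 1 - real m / 3) * 2 ^ m = 2/3 * 2 ^ m * m - 2 ^ m * (real m - real d - 1)"
    by (simp add: algebra_simps)
  moreover have "real m * (2 ^ m / 12) \<le> (real d + 1 - real m / 3) * 2 ^ m"
    using mult_right_mono[OF d_large, of "2 ^ m"] by simp
  ultimately have "real m * (2 ^ m / 12) \<le> real m * B"
    by linarith
  then have "2 ^ m \<le> 12 * B"
    using False unfolding m_def by (simp add: mult_le_cancel_left_pos)
  then have "2 ^ m * (5/7) ^ d \<le> 12 * real K * (12/7) ^ m"
    by (simp add: B_def le_divide_eq)
  then have "real (2 ^ (m div 5)) \<le> real (2 ^ 48 * K ^ 12)"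
    using two_power_div5_le[of m d "real K"] d_bounds by simp
  then show ?thesis
    unfolding m_def of_nat_le_iff .
qed

lemma card_bit_strings_le: "card {xs :: bool list. length xs \<le> s} < 2 ^ Suc s"
proof -
  have "card {xs :: bool list. length xs \<le> s} = (\<Sum>i<Suc s. 2 ^ i)"
    using card_lists_length_le[of "UNIV :: bool set" s] by (simp add: lessThan_Suc_atMost)
  also have "\<dots> = 2 ^ Suc s - 1"
    using sum_power2[of "Suc s"] by (simp add: atLeast0LessThan)
  finally show ?thesis
    by simp
qed

lemma index_lower_bound:
  fixes I :: "'i set" and P :: "'r pmf"
    and enc :: "'r \<Rightarrow> ('i \<Rightarrow> bool) \<Rightarrow> bool list" and dec :: "'r \<Rightarrow> bool list \<Rightarrow> 'i \<Rightarrow> bool"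
  assumes "finite I" and short: "\<And>r x. length (enc r x) \<le> s"
    and correct: "\<And>x i. x \<in> PiE I (\<lambda>_. UNIV) \<Longrightarrow> i \<in> I \<Longrightarrow>
      2/3 \<le> measure_pmf.prob P {r. dec r (enc r x) i = x i}"
  shows "card I \<le> 60 * s + 304"
proof -
  define X where "X = PiE I (\<lambda>_. UNIV :: bool set)"
  have "finite X"
    using \<open>finite I\<close> by (simp add: X_def finite_PiE)
  then obtain r where r: "2/3 * card X * card I \<le> (\<Sum>x\<in>X. card {i\<in>I. dec r (enc r x) i = x i})"
    using exists_seed_good_on_average[of X I "2/3" P "\<lambda>r x i. dec r (enc r x) i = x i"]
      \<open>finite I\<close> correct unfolding X_def by blast
  have "card (enc r ` X) \<le> card {xs :: bool list. length xs \<le> s}"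
    using finite_lists_length_le[of "UNIV :: bool set" s] short by (intro card_mono) auto
  then have "card (enc r ` X) \<le> 2 ^ Suc s"
    using card_bit_strings_le[of s] by linarith
  then have "(2::nat) ^ (card I div 5) \<le> 2 ^ 48 * (2 ^ Suc s) ^ 12"
    using index_messages_lower_bound[OF \<open>finite I\<close>, of "enc r" "2 ^ Suc s" "dec r"] r
    unfolding X_def by simp
  also have "\<dots> = 2 ^ (48 + Suc s * 12)"
    by (simp only: power_add power_mult)
  finally have "card I div 5 \<le> 48 + Suc s * 12"
    by (rule power_le_imp_le_exp[rotated]) simp
  then show ?thesis
    by presburger
qed

definition crosses :: "nat set \<Rightarrow> nat set \<Rightarrow> bool" where
  "crosses X e \<longleftrightarrow> e \<inter> X \<noteq> {} \<and> e - X \<noteq> {}"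

lemma cut_size_crosses: "cut_size E X = size (filter_mset (crosses X) E)"
  by (simp add: cut_size_def crosses_def[abs_def])

lemma cut_size_mset: "cut_size (mset es) X = length (filter (crosses X) es)"
  by (simp add: cut_size_crosses flip: mset_filter)

lemma cut_size_add [simp]: "cut_size (A + B) X = cut_size A X + cut_size B X"
  by (simp add: cut_size_crosses)

lemma count_le_cut_size: "crosses X e \<Longrightarrow> count E e \<le> cut_size E X"
  using count_le_size[of "filter_mset (crosses X) E" e] by (simp add: cut_size_crosses)

lemma cut_size_Diff:
  assumes "\<forall>e\<in>#E. e \<subseteq> V"
  shows "cut_size E (V - X) = cut_size E X"
proof -
  have "filter_mset (crosses (V - X)) E = filter_mset (crosses X) E"
    using assms by (intro filter_mset_cong) (auto simp: crosses_def)
  then show ?thesis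
    by (simp add: cut_size_crosses)
qed

lemma cut_size_ge_or_pair:
  assumes "X \<noteq> {}" "X \<subset> V" "h \<in> V" "a \<in> V" "b \<in> V" "h \<noteq> a" "h \<noteq> b"
    and pair: "k \<le> count E {a, b}" and hub: "\<forall>v\<in>V - {h, a, b}. k \<le> count E {h, v}"
  shows "k \<le> cut_size E X \<or> X = {a, b} \<or> X = V - {a, b}"
proof (rule ccontr)
  assume "\<not> ?thesis"
  then have "\<not> k \<le> cut_size E X" "X \<noteq> {a, b}" "X \<noteq> V - {a, b}"
    by auto
  from this(1) have uncrossed: "\<not> crosses X e" if "k \<le> count E e" for e
    using that count_le_cut_size[of X e E] by linarith
  have "a \<in> X \<longleftrightarrow> b \<in> X"
    using pair uncrossed by (auto simp: crosses_def)
  moreover have "v \<in> X \<longleftrightarrow> h \<in> X" if "v \<in> V - {a, b}" for v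
    using that hub uncrossed[of "{h, v}"] by (cases "v = h") (auto simp: crosses_def)
  ultimately show False
    using assms(1-3) \<open>X \<noteq> {a, b}\<close> \<open>X \<noteq> V - {a, b}\<close> by (cases "h \<in> X") blast+
qed

lemma k_edge_connected_iff_pair_cut:
  assumes edges: "\<forall>e\<in>#E. e \<subseteq> verts n"
    and vertices: "h \<in> verts n" "a \<in> verts n" "b \<in> verts n" "h \<noteq> a" "h \<noteq> b"
    and "l \<le> k" and pair: "k \<le> count E {a, b}" and hub: "\<forall>v\<in>verts n - {h, a, b}. k \<le> count E {h, v}"
  shows "k_edge_connected n l E \<longleftrightarrow> l \<le> cut_size E {a, b}"
proof
  assume "k_edge_connected n l E"
  moreover have "{a, b} \<subset> verts n"
    using vertices by blast
  ultimately show "l \<le> cut_size E {a, b}"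
    unfolding k_edge_connected_def by (metis insert_not_empty)
next
  assume pair_cut: "l \<le> cut_size E {a, b}"
  show "k_edge_connected n l E"
    unfolding k_edge_connected_def
  proof (intro allI impI)
    fix X assume "X \<noteq> {} \<and> X \<subset> verts n"
    then consider "k \<le> cut_size E X" | "X = {a, b}" | "X = verts n - {a, b}"
      using cut_size_ge_or_pair[OF _ _ vertices pair hub] by blast
    then show "l \<le> cut_size E X"
    proof cases
      case 1
      then show ?thesis
        using \<open>l \<le> k\<close> by linarith
    next
      case 2
      then show ?thesis
        using pair_cut by simp
    next
      case 3
      then show ?thesis
        using pair_cut cut_size_Diff[OF edges] by simp
    qed
  qed
qed

text \<open>Vertex \<open>0\<close> is the hub, the left pairs occupy \<open>1..2M\<close> and the right pairs follow.\<close>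

definition left_vertex :: "nat \<Rightarrow> bool \<Rightarrow> nat" where
  "left_vertex j e = Suc (2 * j + of_bool e)"

definition right_vertex :: "nat \<Rightarrow> nat \<Rightarrow> bool \<Rightarrow> nat" where
  "right_vertex M r e = Suc (2 * M + 2 * r + of_bool e)"

lemma left_vertex_eq_iff [simp]: "left_vertex j e = left_vertex j' e' \<longleftrightarrow> j = j' \<and> e = e'"
  unfolding left_vertex_def by (cases e; cases e'; simp; presburger)

lemma right_vertex_eq_iff [simp]: "right_vertex M r e = right_vertex M r' e' \<longleftrightarrow> r = r' \<and> e = e'"
  unfolding right_vertex_def by (cases e; cases e'; simp; presburger)

lemma left_vertex_neq_right_vertex [simp]:
  "j < M \<Longrightarrow> left_vertex j e \<noteq> right_vertex M r e'"
  "j < M \<Longrightarrow> right_vertex M r e' \<noteq> left_vertex j e"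
  by (cases e; cases e'; simp add: left_vertex_def right_vertex_def)+

lemma vertex_pos [simp]:
  "0 < left_vertex j e" "left_vertex j e \<noteq> 0" "0 < right_vertex M r e" "right_vertex M r e \<noteq> 0"
  by (simp_all add: left_vertex_def right_vertex_def)

definition gadget :: "nat \<Rightarrow> nat \<Rightarrow> nat \<Rightarrow> bool \<Rightarrow> nat set list" where
  "gadget M j t \<beta> =
     [{left_vertex j False, right_vertex M (j + t) (\<not> \<beta>)}, {left_vertex j True, right_vertex M (j + t) \<beta>}]"

definition index_edges :: "nat \<Rightarrow> nat \<Rightarrow> (nat \<times> nat \<Rightarrow> bool) \<Rightarrow> nat set list" where
  "index_edges M D x = concat (map (\<lambda>(j, t). gadget M j t (x (j, t))) (List.product [0..<M] [0..<D]))"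

definition other_crossings :: "nat \<Rightarrow> nat \<Rightarrow> nat \<Rightarrow> nat \<Rightarrow> nat" where
  "other_crossings M D j t =
     (\<Sum>(j', t') \<in> {..<M} \<times> {..<D} - {(j, t)}. of_bool (j' = j) + of_bool (j' + t' = j + t))"

lemma crosses_pair: "u \<noteq> w \<Longrightarrow> crosses X {u, w} \<longleftrightarrow> (u \<in> X) \<noteq> (w \<in> X)"
  by (auto simp: crosses_def)

lemma crossings_gadget:
  assumes "j < M" "j' < M"
  shows "length (filter (crosses {left_vertex j False, right_vertex M (j + t) False}) (gadget M j' t' \<beta>)) =
    (if (j', t') = (j, t) then (if \<beta> then 0 else 2) else of_bool (j' = j) + of_bool (j' + t' = j + t))"
proof -
  let ?X = "{left_vertex j False, right_vertex M (j + t) False}"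
  have "left_vertex j' e \<in> ?X \<longleftrightarrow> j' = j \<and> \<not> e" for e
    using assms by auto
  moreover have "right_vertex M r e \<in> ?X \<longleftrightarrow> r = j + t \<and> \<not> e" for r e
    using assms by auto
  ultimately show ?thesis
    using assms by (cases \<beta>) (auto simp: gadget_def crosses_pair)
qed

lemma cut_size_index_edges:
  assumes "j < M" "t < D"
  shows "cut_size (mset (index_edges M D x)) {left_vertex j False, right_vertex M (j + t) False}
    = other_crossings M D j t + (if x (j, t) then 0 else 2)"
proof -
  let ?X = "{left_vertex j False, right_vertex M (j + t) False}"
  let ?c = "\<lambda>(j', t'). length (filter (crosses ?X) (gadget M j' t' (x (j', t'))))"
  have "cut_size (mset (index_edges M D x)) ?X = (\<Sum>q \<in> {..<M} \<times> {..<D}. ?c q)"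
    by (simp add: cut_size_mset index_edges_def filter_concat length_concat sum_list_distinct_conv_sum_set
        distinct_product lessThan_atLeast0 case_prod_beta comp_def)
  also have "\<dots> = ?c (j, t) + (\<Sum>q \<in> {..<M} \<times> {..<D} - {(j, t)}. ?c q)"
    using assms by (intro sum.remove) auto
  also have "(\<Sum>q \<in> {..<M} \<times> {..<D} - {(j, t)}. ?c q) = other_crossings M D j t"
    unfolding other_crossings_def
  proof (intro sum.cong refl)
    fix q assume "q \<in> {..<M} \<times> {..<D} - {(j, t)}"
    then obtain j' t' where "q = (j', t')" "j' < M" "(j', t') \<noteq> (j, t)"
      by auto
    then show "?c q = (case q of (j', t') \<Rightarrow> of_bool (j' = j) + of_bool (j' + t' = j + t))"
      using crossings_gadget[OF assms(1), of j' t] by simp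
  qed
  finally show ?thesis
    using assms(1) by (simp add: crossings_gadget)
qed

lemma other_crossings_le:
  assumes "t < D"
  shows "other_crossings M D j t \<le> 2 * (D - 1)"
proof -
  let ?S = "{..<M} \<times> {..<D} - {(j, t)}"
  have card_others: "card ({..<D} - {t}) = D - 1"
    using assms by simp
  have "other_crossings M D j t = card (?S \<inter> {q. fst q = j}) + card (?S \<inter> {q. fst q + snd q = j + t})"
    by (simp add: other_crossings_def sum.distrib case_prod_beta)
  also have "card (?S \<inter> {q. fst q = j}) \<le> D - 1"
  proof -
    have "card (?S \<inter> {q. fst q = j}) \<le> card ({j} \<times> ({..<D} - {t}))"
      by (intro card_mono) auto
    then show ?thesis
      using card_others by (simp add: card_cartesian_product_singleton)
  qed
  also have "card (?S \<inter> {q. fst q + snd q = j + t}) \<le> D - 1"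
  proof -
    have "inj_on snd (?S \<inter> {q. fst q + snd q = j + t})"
      by (auto simp: inj_on_def)
    then have "card (?S \<inter> {q. fst q + snd q = j + t}) = card (snd ` (?S \<inter> {q. fst q + snd q = j + t}))"
      by (rule card_image[symmetric])
    also have "\<dots> \<le> card ({..<D} - {t})"
      by (intro card_mono) auto
    finally show ?thesis
      using card_others by simp
  qed
  finally show ?thesis
    by simp
qed

definition hub_edges :: "nat \<Rightarrow> nat \<Rightarrow> nat set \<Rightarrow> nat set list" where
  "hub_edges n k A = concat (map (\<lambda>v. replicate k {0, v}) (filter (\<lambda>v. v \<notin> A) [1..<n]))"

lemma count_hub_edges:
  assumes "v \<in> verts n - insert 0 A"
  shows "k \<le> count (mset (hub_edges n k A)) {0, v}"
proof -
  have "k \<le> count (mset (concat (map (\<lambda>v. replicate k {0, v}) vs))) {0, v}" if "v \<in> set vs" for vs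
    using that by (induction vs) auto
  then show ?thesis
    using assms by (simp add: hub_edges_def verts_def)
qed

lemma set_hub_edges: "e \<in> set (hub_edges n k A) \<Longrightarrow> \<exists>v \<in> verts n - insert 0 A. e = {0, v}"
  by (auto simp: hub_edges_def verts_def split: if_splits)

definition query_edges :: "nat \<Rightarrow> nat \<Rightarrow> nat \<Rightarrow> nat \<Rightarrow> nat \<Rightarrow> nat \<Rightarrow> nat set list" where
  "query_edges n k M D j t =
     (let a = left_vertex j False; b = right_vertex M (j + t) False
      in replicate k {a, b} @ hub_edges n k {a, b} @ replicate (k - 1 - other_crossings M D j t) {a, 0})"

definition query_stream :: "nat \<Rightarrow> nat \<Rightarrow> nat \<Rightarrow> nat \<Rightarrow> nat \<Rightarrow> nat \<Rightarrow> item list" where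
  "query_stream n k M D j t = map Inl (query_edges n k M D j t) @ [Inr {left_vertex j False, 0}]"

definition index_stream ::
    "nat \<Rightarrow> nat \<Rightarrow> nat \<Rightarrow> nat \<Rightarrow> (nat \<times> nat \<Rightarrow> bool) \<Rightarrow> nat \<Rightarrow> nat \<Rightarrow> item list" where
  "index_stream n k M D x j t = map Inl (index_edges M D x) @ query_stream n k M D j t"

lemma stream_edges_Inl_append [simp]: "stream_edges (map Inl es @ xs) = mset es + stream_edges xs"
  by (induction es) (auto simp: stream_edges_def)

lemma stream_links_Inl_append [simp]: "stream_links (map Inl es @ xs) = stream_links xs"
  by (induction es) (auto simp: stream_links_def)

lemma stream_edges_index_stream:
  "stream_edges (index_stream n k M D x j t) = mset (index_edges M D x) + mset (query_edges n k M D j t)"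
  by (simp add: index_stream_def query_stream_def) (simp add: stream_edges_def)

lemma stream_links_index_stream: "stream_links (index_stream n k M D x j t) = {{left_vertex j False, 0}}"
  by (simp add: index_stream_def query_stream_def) (simp add: stream_links_def)

lemma run_append: "run A r (xs @ ys) = fold (\<lambda>y st. step A r st y) ys (run A r xs)"
  by (simp add: run_def)

lemma is_pair_doubleton: "u < n \<Longrightarrow> w < n \<Longrightarrow> u \<noteq> w \<Longrightarrow> is_pair n {u, w}"
  by (simp add: is_pair_def verts_def)

context
  fixes n k M D j t :: nat
  assumes degree: "2 * D \<le> k + 1" and "D \<le> M" and room: "6 * M \<le> n" and "j < M" "t < D"
begin

abbreviation "a \<equiv> left_vertex j False"
abbreviation "b \<equiv> right_vertex M (j + t) False"

lemma vertices_less: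
  "j' < M \<Longrightarrow> left_vertex j' e < n"
  "j' < M \<Longrightarrow> t' < D \<Longrightarrow> right_vertex M (j' + t') e < n"
  using \<open>D \<le> M\<close> room by (cases e; simp add: left_vertex_def right_vertex_def)+

lemma query_vertices: "0 \<in> verts n" "a \<in> verts n" "b \<in> verts n" "a \<noteq> b"
  using vertices_less(1)[OF \<open>j < M\<close>, of False] vertices_less(2)[OF \<open>j < M\<close> \<open>t < D\<close>, of False]
    \<open>j < M\<close> by (auto simp: verts_def)

lemma index_edges_pairs: "e \<in> set (index_edges M D x) \<Longrightarrow> is_pair n e"
  by (auto simp: index_edges_def gadget_def intro!: is_pair_doubleton vertices_less)

lemma query_edges_pairs: "e \<in> set (query_edges n k M D j t) \<Longrightarrow> is_pair n e"
  using query_vertices by (auto simp: query_edges_def Let_def verts_def intro!: is_pair_doubleton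
      dest!: set_hub_edges split: if_splits)

lemma cut_size_query_edges:
  "cut_size (mset (query_edges n k M D j t)) {a, b} = k - 1 - other_crossings M D j t"
proof -
  have "filter (crosses {a, b}) (hub_edges n k {a, b}) = []"
    by (auto simp: filter_empty_conv crosses_def dest!: set_hub_edges)
  then show ?thesis
    using query_vertices unfolding query_edges_def Let_def cut_size_mset by (simp add: crosses_def)
qed

lemma cut_size_index_stream:
  "cut_size (stream_edges (index_stream n k M D x j t)) {a, b} = k - 1 + (if x (j, t) then 0 else 2)"
proof -
  have "other_crossings M D j t \<le> k - 1"
    using other_crossings_le[OF \<open>t < D\<close>, of M j] degree by linarith
  then show ?thesis
    using cut_size_index_edges[OF \<open>j < M\<close> \<open>t < D\<close>]
    by (simp add: stream_edges_index_stream cut_size_query_edges)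
qed

lemma k_edge_connected_index_stream_iff:
  assumes "S \<subseteq> {{a, 0}}" "l \<le> k"
  shows "k_edge_connected n l (stream_edges (index_stream n k M D x j t) + mset_set S)
    \<longleftrightarrow> l \<le> k - 1 + (if x (j, t) then 0 else 2) + card S"
proof -
  let ?E = "stream_edges (index_stream n k M D x j t) + mset_set S"
  have "finite S"
    using assms(1) finite_subset by blast
  have edges: "\<forall>e\<in>#?E. e \<subseteq> verts n"
    using index_edges_pairs query_edges_pairs assms(1) query_vertices \<open>finite S\<close>
    by (auto simp: stream_edges_index_stream is_pair_def)
  have pair: "k \<le> count ?E {a, b}"
    by (simp add: stream_edges_index_stream query_edges_def Let_def)
  have hub: "\<forall>v\<in>verts n - {0, a, b}. k \<le> count ?E {0, v}"
  proof
    fix v assume "v \<in> verts n - {0, a, b}"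
    then have "k \<le> count (mset (hub_edges n k {a, b})) {0, v}"
      by (intro count_hub_edges) auto
    then show "k \<le> count ?E {0, v}"
      by (simp add: stream_edges_index_stream query_edges_def Let_def)
  qed
  have "cut_size (mset_set S) {a, b} = card S"
    using assms(1) query_vertices(4) by (cases "S = {}") (auto simp: cut_size_def dest!: subset_singletonD)
  then show ?thesis
    using k_edge_connected_iff_pair_cut[OF edges query_vertices(1-3) _ _ \<open>l \<le> k\<close> pair hub]
      cut_size_index_stream by simp
qed

lemma index_stream_valid: "valid_stream n k (index_stream n k M D x j t)"
  unfolding valid_stream_def
proof (intro conjI)
  have "is_pair n {a, 0}"
    using query_vertices by (auto simp: is_pair_def)
  then show "\<forall>y\<in>set (index_stream n k M D x j t). is_pair n (case y of Inl e \<Rightarrow> e | Inr l \<Rightarrow> l)"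
    using index_edges_pairs query_edges_pairs by (auto simp: index_stream_def query_stream_def)
  have "1 \<le> k"
    using degree \<open>t < D\<close> by linarith
  then show "k_edge_connected n (k - 1) (stream_edges (index_stream n k M D x j t))"
    and "k_edge_connected n k (stream_edges (index_stream n k M D x j t)
      + mset_set (stream_links (index_stream n k M D x j t)))"
    using k_edge_connected_index_stream_iff[of "{}" "k - 1" x]
      k_edge_connected_index_stream_iff[of "{{a, 0}}" k x]
    by (simp_all add: stream_links_index_stream)
qed

text \<open>If the bit is \<open>False\<close>, the empty set is feasible, so any approximate solution is empty,
  whatever the factor \<open>\<alpha>\<close>.\<close>

lemma approx_solution_index_stream:
  assumes "approx_solution \<alpha> n k (index_stream n k M D x j t) S"
  shows "S \<noteq> {} \<longleftrightarrow> x (j, t)"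
proof -
  have links: "S \<subseteq> {{a, 0}}"
    and connected: "k_edge_connected n k (stream_edges (index_stream n k M D x j t) + mset_set S)"
    and optimal: "\<And>S'. augments n k (index_stream n k M D x j t) S' \<Longrightarrow> card S \<le> \<alpha> * card S'"
    using assms by (auto simp: approx_solution_def augments_def stream_links_index_stream)
  have "1 \<le> k"
    using degree \<open>t < D\<close> by linarith
  show ?thesis
  proof (cases "x (j, t)")
    case True
    then show ?thesis
      using connected k_edge_connected_index_stream_iff[OF links, of k] \<open>1 \<le> k\<close> by auto
  next
    case False
    then have "augments n k (index_stream n k M D x j t) {}"
      using k_edge_connected_index_stream_iff[of "{}" k x] \<open>1 \<le> k\<close>
      by (simp add: augments_def)
    then have "card S = 0"
      using optimal by fastforce
    moreover have "finite S"
      using links finite_subset by blast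
    ultimately show ?thesis
      using False by simp
  qed
qed

end

lemma index_size_le_space:
  assumes "1 \<le> D" "D \<le> M" "2 * D \<le> k + 1" "6 * M \<le> n"
    and solves: "solves A P \<alpha> n k" and space: "uses_space A n k s"
  shows "M * D \<le> 60 * s + 304"
proof -
  define enc where "enc r x = run A r (map Inl (index_edges M D x))" for r x
  define dec where "dec r st = (\<lambda>(j, t). out A r (fold (\<lambda>y st. step A r st y) (query_stream n k M D j t) st) \<noteq> {})"
    for r st
  have run_index_stream: "run A r (index_stream n k M D x j t)
      = fold (\<lambda>y st. step A r st y) (query_stream n k M D j t) (enc r x)" for r x j t
    by (simp add: index_stream_def run_append enc_def)
  have "card ({..<M} \<times> {..<D}) \<le> 60 * s + 304"
  proof (rule index_lower_bound)
    show "length (enc r x) \<le> s" for r x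
    proof -
      have "valid_stream n k (index_stream n k M D x 0 0)"
        using assms by (intro index_stream_valid) auto
      then have "length (run A r (take (length (index_edges M D x)) (index_stream n k M D x 0 0))) \<le> s"
        using space unfolding uses_space_def by blast
      then show ?thesis
        by (simp add: index_stream_def enc_def)
    qed
    show "2/3 \<le> measure_pmf.prob P {r. dec r (enc r x) q = x q}" if "q \<in> {..<M} \<times> {..<D}" for x q
    proof -
      obtain j t where q: "q = (j, t)" "j < M" "t < D"
        using \<open>q \<in> {..<M} \<times> {..<D}\<close> by (cases q) auto
      then have "valid_stream n k (index_stream n k M D x j t)"
        using assms by (intro index_stream_valid) auto
      then have "2/3 \<le> measure_pmf.prob P
          {r. approx_solution \<alpha> n k (index_stream n k M D x j t) (out A r (run A r (index_stream n k M D x j t)))}"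
        using solves unfolding solves_def by blast
      also have "\<dots> \<le> measure_pmf.prob P {r. dec r (enc r x) q = x q}"
        using assms q approx_solution_index_stream[of D k M n j t]
        by (intro measure_pmf.finite_measure_mono) (auto simp: dec_def run_index_stream)
      finally show ?thesis .
    qed
  qed simp
  then show ?thesis
    by (simp add: card_cartesian_product)
qed

lemma space_lower_bound:
  assumes "160000 \<le> n" "1 \<le> k" "k \<le> n" "solves A P \<alpha> n k" "uses_space A n k s"
  shows "n * k \<le> 30720 * s"
proof -
  define M where "M = n div 8"
  define D where "D = min ((k + 1) div 2) M"
  have "M * D \<le> 60 * s + 304"
    using assms by (intro index_size_le_space) (auto simp: M_def D_def)
  moreover have "n * k \<le> (16 * M) * (16 * D)"
    using assms by (intro mult_le_mono) (auto simp: M_def D_def)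
  moreover have "n \<le> n * k"
    using assms(2) by simp
  ultimately show ?thesis
    using assms(1) by linarith
qed

theorem mainTheorem9:
  "\<forall>\<alpha>::real. \<alpha> \<ge> 1 \<longrightarrow> (\<exists>c>0. \<exists>N. \<forall>n k s A P.
      N \<le> n \<and> 1 \<le> k \<and> k \<le> n \<and> solves A P \<alpha> n k \<and> uses_space A n k s
      \<longrightarrow> real s \<ge> c * real n * real k)"
proof (intro allI impI exI[of _ "1/30720"] conjI exI[of _ 160000])
  fix \<alpha> :: real and n k s A P
  assume "160000 \<le> n \<and> 1 \<le> k \<and> k \<le> n \<and> solves A P \<alpha> n k \<and> uses_space A n k s"
  then have "real (n * k) \<le> real (30720 * s)"
    using space_lower_bound of_nat_mono by blast
  then show "1/30720 * real n * real k \<le> real s"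
    by simp
qed simp

end
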